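(* Let $r,q$ be positive integers, and let $k\ge 1$, $p_1,\dots,p_k\ge 1$ be integers with $\frac{r}{q}=\frac{k-1}{\sum_{i=1}^k p_i}$. Let $s_i$ ($1\le i\le k$), $a_{ij}$ ($1\le i\le k$, $1\le j\le p_i$) and $\nu$ be integers, with all $a_{ij}>0$. Then the identity $$\left\lceil \frac{rn}{q}\right\rceil=\sum_{i=1}^k \left\lceil \frac{r\left(n-s_i-\sum_{j=1}^{p_i}\left\lceil \frac{r(n-a_{ij})}{q}\right\rceil\right)}{q}\right\rceil+\nu$$ holds for all positive integers $n$ if and only if it holds for all integers $n$ with $0<n\le q^2$.
   Context: This identity expresses that the sequence $B(n)=\lceil rn/q\rceil$ (defined for all integers $n$) formally satisfies the nested recursion $R(n)=\sum_{i=1}^k R\big(n-s_i-\sum_{j=1}^{p_i}R(n-a_{ij})\big)+\nu$, i.e. substituting $B$ for $R$ on both sides gives an equality (no claim is made that the recursion generates $B$ from initial conditions). *)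

theory Defs
  imports Complex_Main
begin

definition cdiv :: "int \<Rightarrow> int \<Rightarrow> int \<Rightarrow> int" where
  "cdiv r q n = \<lceil>(of_int (r * n) :: rat) / of_int q\<rceil>"

definition rec_identity ::
  "int \<Rightarrow> int \<Rightarrow> nat \<Rightarrow> (nat \<Rightarrow> nat) \<Rightarrow> (nat \<Rightarrow> int) \<Rightarrow> (nat \<Rightarrow> nat \<Rightarrow> int) \<Rightarrow> int \<Rightarrow> int \<Rightarrow> bool" where
  "rec_identity r q k p s a \<nu> n \<longleftrightarrow>
     cdiv r q n = (\<Sum>i=1..k. cdiv r q (n - s i - (\<Sum>j=1..p i. cdiv r q (n - a i j)))) + \<nu>"

end

theory Submission
  imports Defs
begin

text \<open>Shifting \<open>n\<close> by \<open>q m\<close> shifts \<open>\<lceil>r n / q\<rceil>\<close> by \<open>r m\<close>. Shifting \<open>n\<close> by \<open>q\<^sup>2 m\<close>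
  therefore shifts each inner sum by \<open>p\<^sub>i r q m\<close>, each outer argument by
  \<open>q (q m - p\<^sub>i r m)\<close>, and the right-hand side by \<open>r m (k q - r \<Sum>p\<^sub>i) = r q m\<close>, exactly
  like the left-hand side, because \<open>r \<Sum>p\<^sub>i = (k - 1) q\<close>. So the identity is periodic in \<open>n\<close>
  with period \<open>q\<^sup>2\<close>, and one full period decides it for all \<open>n\<close>.\<close>

lemma cdiv_add_mult:
  assumes "q > 0"
  shows "cdiv r q (n + q * m) = cdiv r q n + r * m"
proof -
  have "(of_int (r * (n + q * m)) :: rat) / of_int q = of_int (r * n) / of_int q + of_int (r * m)"
    using assms by (simp add: field_simps)
  then show ?thesis
    unfolding cdiv_def by (metis ceiling_add_of_int)
qed

lemma cross_mult_of_rat_div_eq: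
  fixes r q a b :: int
  assumes "r \<noteq> 0" and "q \<noteq> 0"
    and "(of_int r :: rat) / of_int q = of_int a / of_int b"
  shows "r * b = a * q"
proof -
  have "b \<noteq> 0"
    using assms by auto
  with assms have "(of_int (r * b) :: rat) = of_int (a * q)"
    by (simp add: field_simps)
  then show ?thesis
    by (rule of_int_eq_iff[THEN iffD1])
qed

lemma rec_identity_add_mult_square:
  assumes "q > 0" and rate: "r * int (\<Sum>i=1..k. p i) = (int k - 1) * q"
  shows "rec_identity r q k p s a \<nu> (n + q\<^sup>2 * m) \<longleftrightarrow> rec_identity r q k p s a \<nu> n"
proof -
  define B where "B = cdiv r q"
  have B_shift: "B (x + q * y) = B x + r * y" for x y
    unfolding B_def using assms(1) by (rule cdiv_add_mult)
  define S where "S i = (\<Sum>j=1..p i. B (n - a i j))" for i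
  have inner: "(\<Sum>j=1..p i. B (n + q\<^sup>2 * m - a i j)) = S i + int (p i) * (r * q * m)" for i
  proof -
    have "(\<Sum>j=1..p i. B (n + q\<^sup>2 * m - a i j)) = (\<Sum>j=1..p i. B (n - a i j) + r * (q * m))"
      using B_shift[of "n - a i _" "q * m"] by (simp add: power2_eq_square algebra_simps)
    then show ?thesis
      by (simp add: S_def sum.distrib)
  qed
  have outer: "B (n + q\<^sup>2 * m - s i - (\<Sum>j=1..p i. B (n + q\<^sup>2 * m - a i j)))
      = B (n - s i - S i) + r * (q * m - int (p i) * r * m)" for i
  proof -
    have "n + q\<^sup>2 * m - s i - (\<Sum>j=1..p i. B (n + q\<^sup>2 * m - a i j))
        = (n - s i - S i) + q * (q * m - int (p i) * r * m)"
      unfolding inner by (simp add: power2_eq_square algebra_simps)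
    then show ?thesis
      by (metis B_shift)
  qed
  have "(\<Sum>i=1..k. r * (q * m - int (p i) * r * m))
      = r * m * (int k * q - r * int (\<Sum>i=1..k. p i))"
    by (simp add: sum_subtractf sum_distrib_left sum_distrib_right algebra_simps)
  also have "\<dots> = r * q * m"
  proof -
    have "int k * q - r * int (\<Sum>i=1..k. p i) = q"
      using rate by (simp add: algebra_simps)
    then show ?thesis
      by simp
  qed
  finally have rhs: "(\<Sum>i=1..k. B (n + q\<^sup>2 * m - s i - (\<Sum>j=1..p i. B (n + q\<^sup>2 * m - a i j))))
      = (\<Sum>i=1..k. B (n - s i - S i)) + r * q * m"
    unfolding outer sum.distrib by simp
  have lhs: "B (n + q\<^sup>2 * m) = B n + r * q * m"
    using B_shift[of n "q * m"] by (simp add: power2_eq_square algebra_simps)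
  show ?thesis
    unfolding rec_identity_def B_def[symmetric] using lhs rhs by (simp add: S_def)
qed

lemma periodic_pos_iff_first_period:
  fixes P :: "int \<Rightarrow> bool"
  assumes "d > 0" and periodic: "\<And>n m. P (n + d * m) \<longleftrightarrow> P n"
  shows "(\<forall>n > 0. P n) \<longleftrightarrow> (\<forall>n. 0 < n \<and> n \<le> d \<longrightarrow> P n)"
proof (intro iffI allI impI)
  fix n :: int
  assume first_period: "\<forall>n. 0 < n \<and> n \<le> d \<longrightarrow> P n" and "n > 0"
  define n\<^sub>0 where "n\<^sub>0 = (n - 1) mod d + 1"
  have "0 < n\<^sub>0 \<and> n\<^sub>0 \<le> d"
    unfolding n\<^sub>0_def using \<open>d > 0\<close> pos_mod_bound[of d "n - 1"] pos_mod_sign[of d "n - 1"] by linarith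
  moreover have "n = n\<^sub>0 + d * ((n - 1) div d)"
    unfolding n\<^sub>0_def using div_mult_mod_eq[of "n - 1" d] by (simp add: algebra_simps)
  ultimately show "P n"
    using first_period periodic by metis
qed auto

theorem theorem1:
  fixes r q :: int and k :: nat and p :: "nat \<Rightarrow> nat"
    and s :: "nat \<Rightarrow> int" and a :: "nat \<Rightarrow> nat \<Rightarrow> int" and \<nu> :: int
  assumes "r > 0" and "q > 0" and "k \<ge> 1"
    and "\<forall>i\<in>{1..k}. p i \<ge> 1"
    and "(of_int r :: rat) / of_int q = (of_nat k - 1) / of_nat (\<Sum>i=1..k. p i)"
    and "\<forall>i\<in>{1..k}. \<forall>j\<in>{1..p i}. a i j > 0"
  shows "(\<forall>n::int. n > 0 \<longrightarrow> rec_identity r q k p s a \<nu> n) \<longleftrightarrow>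
         (\<forall>n::int. 0 < n \<and> n \<le> q^2 \<longrightarrow> rec_identity r q k p s a \<nu> n)"
proof (rule periodic_pos_iff_first_period)
  have "(of_int r :: rat) / of_int q = of_int (int k - 1) / of_int (int (\<Sum>i=1..k. p i))"
    using assms(5) by simp
  then have "r * int (\<Sum>i=1..k. p i) = (int k - 1) * q"
    using assms(1,2) by (intro cross_mult_of_rat_div_eq) auto
  with assms(2) show "rec_identity r q k p s a \<nu> (n + q\<^sup>2 * m) \<longleftrightarrow> rec_identity r q k p s a \<nu> n"
    for n m
    by (rule rec_identity_add_mult_square)
  show "q\<^sup>2 > 0"
    using assms(2) by simp
qed

end
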